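(* Let $\mathcal{H}$ be a complex Hilbert space, let $B,X\in\mathcal{B}(\mathcal{H})$, and let $A\in\mathcal{B}(\mathcal{H})$ be positive and invertible. Let $M=\begin{pmatrix} A & X\\ X^{*} & B\end{pmatrix}\in\mathcal{B}(\mathcal{H}\oplus\mathcal{H})$, and assume that $AB-X^{*}X=0$ and $AX=XA$. Then there exists $W\in\mathcal{B}(\mathcal{H})$ such that $X=AW$ and $B=W^{*}AW$, i.e. $$M=\begin{pmatrix} A & AW\\ W^{*}A & W^{*}AW\end{pmatrix}.$$
   Context: Here $\det M:=AB-X^{*}X$. A matrix of the displayed form is called a flat extension of $A$. *)

theory Defs
  imports "HOL-Analysis.Analysis"
begin

class complex_vector = real_vector +
  fixes scaleC :: "complex \<Rightarrow> 'a \<Rightarrow> 'a" (infixr \<open>*\<^sub>C\<close> 75)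
  assumes scaleC_add_right: "a *\<^sub>C (x + y) = a *\<^sub>C x + a *\<^sub>C y"
    and scaleC_add_left: "(a + b) *\<^sub>C x = a *\<^sub>C x + b *\<^sub>C x"
    and scaleC_scaleC: "a *\<^sub>C (b *\<^sub>C x) = (a * b) *\<^sub>C x"
    and scaleC_one: "1 *\<^sub>C x = x"
    and scaleR_scaleC: "r *\<^sub>R x = (complex_of_real r) *\<^sub>C x"

class complex_inner = complex_vector + real_normed_vector +
  fixes cinner :: "'a \<Rightarrow> 'a \<Rightarrow> complex"
  assumes cinner_conj_sym: "cinner x y = cnj (cinner y x)"
    and cinner_add_right: "cinner x (y + z) = cinner x y + cinner x z"
    and cinner_scaleC_right: "cinner x (c *\<^sub>C y) = c * cinner x y"
    and cinner_self_real: "Im (cinner x x) = 0"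
    and cinner_self_nonneg: "0 \<le> Re (cinner x x)"
    and cinner_self_eq_zero: "cinner x x = 0 \<longleftrightarrow> x = 0"
    and norm_cinner: "norm x = sqrt (Re (cinner x x))"

class chilbert_space = complex_inner + complete_space

definition bounded_op :: "('a::complex_inner \<Rightarrow> 'b::complex_inner) \<Rightarrow> bool" where
  "bounded_op T \<longleftrightarrow> bounded_linear T \<and> (\<forall>c x. T (c *\<^sub>C x) = c *\<^sub>C T x)"

definition adj :: "('a::chilbert_space \<Rightarrow> 'a) \<Rightarrow> ('a \<Rightarrow> 'a)" where
  "adj T = (THE S. bounded_op S \<and> (\<forall>x y. cinner (S x) y = cinner x (T y)))"

definition positive_op :: "('a::chilbert_space \<Rightarrow> 'a) \<Rightarrow> bool" where
  "positive_op A \<longleftrightarrow> bounded_op A \<and>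
     (\<forall>x. Im (cinner x (A x)) = 0 \<and> 0 \<le> Re (cinner x (A x)))"

definition invertible_op :: "('a::chilbert_space \<Rightarrow> 'a) \<Rightarrow> bool" where
  "invertible_op A \<longleftrightarrow> (\<exists>S. bounded_op S \<and> A \<circ> S = id \<and> S \<circ> A = id)"

end

theory Submission
  imports Defs
begin

text \<open>A positive operator is self-adjoint, hence so is its inverse \<open>S\<close>, and taking adjoints in
  \<open>A X = X A\<close> shows that \<open>A\<close>, and therefore \<open>S\<close>, commutes with \<open>X\<^sup>*\<close>. With \<open>W = S X\<close> one gets
  \<open>X = A W\<close> and \<open>W\<^sup>* A W = X\<^sup>* S A S X = S X\<^sup>* X = S A B = B\<close>.
  Since \<open>adj\<close> is defined by a description, all of this needs the existence of adjoints of
  bounded operators, i.e. the Riesz representation theorem, which is derived from the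
  nearest-point property of closed convex sets in a Hilbert space.\<close>

lemma cinner_add_left: "cinner (x + y) z = cinner x z + cinner (y::'a::complex_inner) z"
  by (metis cinner_add_right cinner_conj_sym complex_cnj_add)

lemma cinner_scaleC_left: "cinner (c *\<^sub>C x) y = cnj c * cinner (x::'a::complex_inner) y"
  by (metis cinner_scaleC_right cinner_conj_sym complex_cnj_mult)

lemma cinner_zero_right [simp]: "cinner (x::'a::complex_inner) 0 = 0"
  by (metis add.right_neutral add_cancel_right_right cinner_add_right)

lemma cinner_zero_left [simp]: "cinner 0 (x::'a::complex_inner) = 0"
  by (metis cinner_conj_sym cinner_zero_right complex_cnj_zero)

lemma cinner_minus_right: "cinner (x::'a::complex_inner) (- y) = - cinner x y"
  by (metis add.right_inverse add_eq_0_iff cinner_add_right cinner_zero_right)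

lemma cinner_minus_left: "cinner (- x) (y::'a::complex_inner) = - cinner x y"
  by (metis cinner_conj_sym cinner_minus_right complex_cnj_minus)

lemma cinner_diff_right: "cinner (x::'a::complex_inner) (y - z) = cinner x y - cinner x z"
  by (simp only: diff_conv_add_uminus cinner_add_right cinner_minus_right)

lemma cinner_diff_left: "cinner (x - y) (z::'a::complex_inner) = cinner x z - cinner y z"
  by (simp only: diff_conv_add_uminus cinner_add_left cinner_minus_left)

lemma cinner_self: "cinner x (x::'a::complex_inner) = complex_of_real ((norm x)\<^sup>2)"
  by (simp add: complex_eq_iff cinner_self_real cinner_self_nonneg norm_cinner)

lemma cinner_ext_left:
  fixes a b :: "'a::complex_inner"
  assumes "\<And>y. cinner a y = cinner b y"
  shows "a = b"
proof -
  have "cinner (a - b) (a - b) = 0" using assms by (simp add: cinner_diff_left)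
  then show ?thesis by (simp add: cinner_self_eq_zero)
qed

lemma norm_diff_projection_square:
  fixes x y :: "'a::complex_inner"
  assumes "y \<noteq> 0"
  shows "(norm (x - (cinner y x / complex_of_real ((norm y)\<^sup>2)) *\<^sub>C y))\<^sup>2
           = (norm x)\<^sup>2 - (cmod (cinner y x))\<^sup>2 / (norm y)\<^sup>2"
proof -
  define n where "n = (norm y)\<^sup>2"
  define a where "a = cinner y x"
  define t where "t = a / complex_of_real n"
  have nz: "complex_of_real n \<noteq> 0" using assms by (simp add: n_def)
  have cxy: "cinner x y = cnj a" by (simp add: a_def cinner_conj_sym[of x y])
  have "cinner (x - t *\<^sub>C y) (x - t *\<^sub>C y) =
          cinner x x - t * cinner x y - cnj t * cinner y x + cnj t * t * cinner y y"
    by (simp add: cinner_diff_left cinner_diff_right cinner_scaleC_left cinner_scaleC_right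
        algebra_simps)
  also have "\<dots> = complex_of_real ((norm x)\<^sup>2) - a * cnj a / complex_of_real n"
    unfolding cxy a_def[symmetric] cinner_self[of x] cinner_self[of y] n_def[symmetric] t_def
    using nz by (simp add: divide_simps)
  finally have "complex_of_real ((norm (x - t *\<^sub>C y))\<^sup>2)
                  = complex_of_real ((norm x)\<^sup>2 - (cmod a)\<^sup>2 / n)"
    by (simp add: cinner_self flip: complex_norm_square del: complex_mult_cnj)
  then show ?thesis by (simp only: of_real_eq_iff t_def a_def n_def)
qed

lemma cinner_Cauchy_Schwarz: "cmod (cinner x y) \<le> norm x * norm (y::'a::complex_inner)"
proof (cases "y = 0")
  case True
  then show ?thesis by simp
next
  case False
  have "0 \<le> (norm x)\<^sup>2 - (cmod (cinner y x))\<^sup>2 / (norm y)\<^sup>2"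
    using norm_diff_projection_square[OF False, of x] by (metis zero_le_power2)
  then have "(cmod (cinner y x))\<^sup>2 \<le> (norm x * norm y)\<^sup>2"
    using False by (simp add: field_simps power_mult_distrib)
  then have "cmod (cinner y x) \<le> norm x * norm y"
    by (rule power2_le_imp_le) simp
  then show ?thesis by (metis cinner_conj_sym complex_mod_cnj)
qed

lemma cinner_eq_0_if_norm_le_norm_diff:
  fixes y z :: "'a::complex_inner"
  assumes "\<And>c. norm z \<le> norm (z - c *\<^sub>C y)"
  shows "cinner y z = 0"
proof (cases "y = 0")
  case True
  then show ?thesis by simp
next
  case False
  have "(norm z)\<^sup>2 \<le> (norm (z - (cinner y z / complex_of_real ((norm y)\<^sup>2)) *\<^sub>C y))\<^sup>2"
    using assms by (simp add: power_mono)
  then have "(cmod (cinner y z))\<^sup>2 / (norm y)\<^sup>2 \<le> 0"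
    unfolding norm_diff_projection_square[OF False] by simp
  then have "(cmod (cinner y z))\<^sup>2 \<le> 0" using False by (simp add: divide_le_0_iff)
  then show ?thesis by simp
qed

lemma parallelogram_law_complex:
  fixes u v :: "'a::complex_inner"
  shows "(norm (u + v))\<^sup>2 + (norm (u - v))\<^sup>2 = 2 * (norm u)\<^sup>2 + 2 * (norm v)\<^sup>2"
proof -
  have "cinner (u + v) (u + v) + cinner (u - v) (u - v) = 2 * cinner u u + 2 * cinner v v"
    by (simp add: cinner_add_left cinner_add_right cinner_diff_left cinner_diff_right)
  then have "complex_of_real ((norm (u + v))\<^sup>2 + (norm (u - v))\<^sup>2)
               = complex_of_real (2 * (norm u)\<^sup>2 + 2 * (norm v)\<^sup>2)"
    by (simp add: cinner_self)
  then show ?thesis by (simp only: of_real_eq_iff)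
qed

lemma Cauchy_if_norm_diff_square_le:
  fixes k :: "nat \<Rightarrow> 'a::real_normed_vector"
  assumes bound: "\<And>m n. (norm (k m - k n))\<^sup>2 \<le> e m + e n" and e: "e \<longlonglongrightarrow> 0"
  shows "Cauchy k"
proof (rule CauchyI)
  fix \<epsilon> :: real
  assume "0 < \<epsilon>"
  then have "0 < \<epsilon>\<^sup>2 / 2" by simp
  with e have "\<forall>\<^sub>F n in sequentially. e n < \<epsilon>\<^sup>2 / 2" by (rule order_tendstoD(2))
  then obtain M where M: "\<And>n. n \<ge> M \<Longrightarrow> e n < \<epsilon>\<^sup>2 / 2"
    unfolding eventually_sequentially by blast
  have "norm (k m - k n) < \<epsilon>" if "m \<ge> M" "n \<ge> M" for m n
  proof -
    have "(norm (k m - k n))\<^sup>2 < \<epsilon>\<^sup>2"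
      using bound[of m n] M[OF \<open>m \<ge> M\<close>] M[OF \<open>n \<ge> M\<close>] by linarith
    then show ?thesis using \<open>0 < \<epsilon>\<close> by (simp add: power_less_imp_less_base)
  qed
  then show "\<exists>M. \<forall>m\<ge>M. \<forall>n\<ge>M. norm (k m - k n) < \<epsilon>" by blast
qed

lemma nearest_point_exists:
  fixes x :: "'a::chilbert_space"
  assumes "closed C" and "convex C" and "C \<noteq> {}"
  shows "\<exists>c\<in>C. \<forall>y\<in>C. norm (x - c) \<le> norm (x - y)"
proof -
  define D where "D = (\<lambda>y. (norm (x - y))\<^sup>2) ` C"
  define d where "d = Inf D"
  have D_ne: "D \<noteq> {}" using assms(3) by (simp add: D_def)
  have d_le: "d \<le> (norm (x - y))\<^sup>2" if "y \<in> C" for y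
    unfolding d_def D_def by (rule cInf_lower) (use that in \<open>auto intro: bdd_belowI[of _ 0]\<close>)
  have "\<exists>y\<in>C. (norm (x - y))\<^sup>2 < d + inverse (real (Suc n))" for n
    using cInf_lessD[OF D_ne, of "d + inverse (real (Suc n))"] by (auto simp: d_def D_def)
  then obtain k where k_in: "\<And>n. k n \<in> C"
    and k_close: "\<And>n. (norm (x - k n))\<^sup>2 < d + inverse (real (Suc n))"
    by metis
  have "(norm (k m - k n))\<^sup>2 \<le> 2 * inverse (real (Suc m)) + 2 * inverse (real (Suc n))" for m n
  proof -
    have "midpoint (k m) (k n) \<in> C"
      using convexD[OF assms(2) k_in k_in, of "1/2" "1/2"]
      by (simp add: midpoint_def scaleR_add_right)
    then have "4 * d \<le> 4 * (norm (x - midpoint (k m) (k n)))\<^sup>2" using d_le by simp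
    also have "\<dots> = (norm ((x - k m) + (x - k n)))\<^sup>2"
    proof -
      have "(x - k m) + (x - k n) = 2 *\<^sub>R (x - midpoint (k m) (k n))"
        by (simp add: midpoint_def scaleR_add_right scaleR_diff_right scaleR_2)
      then show ?thesis by (simp add: power_mult_distrib)
    qed
    finally show ?thesis
      using parallelogram_law_complex[of "x - k m" "x - k n"] k_close[of m] k_close[of n]
      by (simp add: norm_minus_commute)
  qed
  then have "Cauchy k"
    by (rule Cauchy_if_norm_diff_square_le)
      (intro tendsto_mult_right_zero LIMSEQ_inverse_real_of_nat)
  then obtain c where lim: "k \<longlonglongrightarrow> c" using Cauchy_convergent_iff convergent_def by blast
  have "c \<in> C" using closed_sequentially[OF assms(1) k_in lim] .
  moreover have "(norm (x - c))\<^sup>2 \<le> d"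
  proof (rule LIMSEQ_le)
    show "(\<lambda>n. (norm (x - k n))\<^sup>2) \<longlonglongrightarrow> (norm (x - c))\<^sup>2" by (intro tendsto_intros lim)
    show "(\<lambda>n. d + inverse (real (Suc n))) \<longlonglongrightarrow> d"
      using tendsto_add[OF tendsto_const LIMSEQ_inverse_real_of_nat] by simp
    show "\<exists>N. \<forall>n\<ge>N. (norm (x - k n))\<^sup>2 \<le> d + inverse (real (Suc n))"
      using k_close less_imp_le by blast
  qed
  ultimately show ?thesis using d_le by (meson order_trans power2_le_imp_le norm_ge_zero)
qed

lemma Riesz_representation:
  fixes f :: "'a::chilbert_space \<Rightarrow> complex"
  assumes "bounded_linear f" and f_scaleC: "\<And>c x. f (c *\<^sub>C x) = c * f x"
  shows "\<exists>v. \<forall>x. f x = cinner v x"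
proof (cases "\<forall>x. f x = 0")
  case True
  then show ?thesis by (intro exI[of _ 0]) simp
next
  case False
  then obtain x0 where "f x0 \<noteq> 0" by auto
  interpret f: bounded_linear f by fact
  define K where "K = f -` {0}"
  have "closed K"
    unfolding K_def
    by (intro continuous_closed_vimage closed_singleton) (auto intro: linear_continuous_at assms(1))
  moreover have "convex K" by (auto simp: K_def convex_def f.add f.scaleR)
  moreover have "0 \<in> K" by (simp add: K_def f.zero)
  ultimately obtain l where "l \<in> K"
    and l_nearest: "\<And>y. y \<in> K \<Longrightarrow> norm (x0 - l) \<le> norm (x0 - y)"
    using nearest_point_exists[of K x0] by blast
  define z where "z = x0 - l"
  have orth: "cinner y z = 0" if "y \<in> K" for y
  proof (rule cinner_eq_0_if_norm_le_norm_diff)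
    fix c
    have "l + c *\<^sub>C y \<in> K" using \<open>l \<in> K\<close> that by (simp add: K_def f.add f_scaleC)
    then show "norm z \<le> norm (z - c *\<^sub>C y)"
      using l_nearest by (simp add: z_def diff_diff_eq)
  qed
  have "f z \<noteq> 0" using \<open>l \<in> K\<close> \<open>f x0 \<noteq> 0\<close> by (simp add: z_def K_def f.diff)
  then have N: "(norm z)\<^sup>2 \<noteq> 0" using f.zero by auto
  have "f x = cinner ((cnj (f z) / complex_of_real ((norm z)\<^sup>2)) *\<^sub>C z) x" for x
  proof -
    have "f x *\<^sub>C z - f z *\<^sub>C x \<in> K" by (simp add: K_def f.diff f_scaleC)
    then have "cinner z (f x *\<^sub>C z - f z *\<^sub>C x) = 0"
      by (metis cinner_conj_sym complex_cnj_zero orth)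
    then have "f x * complex_of_real ((norm z)\<^sup>2) - f z * cinner z x = 0"
      by (simp add: cinner_diff_right cinner_scaleC_right cinner_self)
    then show ?thesis using N by (simp add: cinner_scaleC_left field_simps)
  qed
  then show ?thesis by blast
qed

lemma bounded_op_comp: "bounded_op T \<Longrightarrow> bounded_op U \<Longrightarrow> bounded_op (T \<circ> U)"
  unfolding bounded_op_def comp_def by (auto intro: bounded_linear_compose)

lemma adjoint_exists:
  fixes T :: "'a::chilbert_space \<Rightarrow> 'a"
  assumes "bounded_op T"
  shows "\<exists>S. bounded_op S \<and> (\<forall>x y. cinner (S x) y = cinner x (T y))"
proof -
  have T_scaleC: "\<And>c x. T (c *\<^sub>C x) = c *\<^sub>C T x" using assms by (simp add: bounded_op_def)
  interpret T: bounded_linear T using assms by (simp add: bounded_op_def)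
  obtain K where "K > 0" and T_bound: "\<And>x. norm (T x) \<le> norm x * K" using T.pos_bounded by blast
  have cinner_T_bound: "cmod (cinner x (T y)) \<le> norm x * (norm y * K)" for x y
    using cinner_Cauchy_Schwarz[of x "T y"] T_bound[of y]
    by (meson mult_left_mono norm_ge_zero order_trans)
  have "\<exists>v. \<forall>y. cinner x (T y) = cinner v y" for x
  proof (rule Riesz_representation)
    show "bounded_linear (\<lambda>y. cinner x (T y))"
    proof (rule bounded_linear_intro)
      show "cinner x (T (r *\<^sub>R y)) = r *\<^sub>R cinner x (T y)" for r y
        by (simp add: T_scaleC scaleR_scaleC cinner_scaleC_right scaleR_conv_of_real)
      show "norm (cinner x (T y)) \<le> norm y * (norm x * K)" for y
        using cinner_T_bound[of x y] by (simp add: algebra_simps)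
    qed (simp add: T.add cinner_add_right)
  qed (simp add: T_scaleC cinner_scaleC_right)
  then obtain S where S: "\<And>x y. cinner x (T y) = cinner (S x) y" by metis
  have S_scaleC: "S (c *\<^sub>C a) = c *\<^sub>C S a" for c a
    by (rule cinner_ext_left) (simp add: S[symmetric] cinner_scaleC_left)
  have "bounded_linear S"
  proof (rule bounded_linear_intro)
    show "S (a + b) = S a + S b" for a b
      by (rule cinner_ext_left) (simp add: S[symmetric] cinner_add_left)
    show "S (r *\<^sub>R a) = r *\<^sub>R S a" for r a
      by (simp add: scaleR_scaleC S_scaleC)
    show "norm (S x) \<le> norm x * K" for x
    proof -
      have "norm (S x) * norm (S x) = cmod (cinner x (T (S x)))"
        by (simp add: S cinner_self norm_power flip: power2_eq_square)
      also have "\<dots> \<le> norm x * K * norm (S x)"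
        using cinner_T_bound[of x "S x"] by (simp add: algebra_simps)
      finally show ?thesis
        by (cases "S x = 0") (use \<open>K > 0\<close> in auto)
    qed
  qed
  then show ?thesis using S S_scaleC by (auto simp: bounded_op_def)
qed

lemma cinner_adj_left:
  fixes T :: "'a::chilbert_space \<Rightarrow> 'a"
  assumes "bounded_op T"
  shows "cinner (adj T x) y = cinner x (T y)"
proof -
  have "S1 = S2" if "\<forall>x y. cinner (S1 x) y = cinner x (T y)"
    and "\<forall>x y. cinner (S2 x) y = cinner x (T y)" for S1 S2 :: "'a \<Rightarrow> 'a"
    using that by (intro ext cinner_ext_left) simp
  then have "\<exists>!S. bounded_op S \<and> (\<forall>x y. cinner (S x) y = cinner x (T y))"
    using adjoint_exists[OF assms] by blast
  from theI'[OF this] show ?thesis unfolding adj_def by blast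
qed

lemma adj_eqI:
  fixes T :: "'a::chilbert_space \<Rightarrow> 'a"
  assumes "bounded_op T" and "\<And>x y. cinner (S x) y = cinner x (T y)"
  shows "adj T = S"
  using assms by (intro ext cinner_ext_left) (simp add: cinner_adj_left)

lemma adj_comp:
  fixes T U :: "'a::chilbert_space \<Rightarrow> 'a"
  assumes "bounded_op T" and "bounded_op U"
  shows "adj (T \<circ> U) = adj U \<circ> adj T"
  using assms by (intro adj_eqI bounded_op_comp) (simp_all add: cinner_adj_left)

lemma positive_op_cinner_sym:
  fixes A :: "'a::chilbert_space \<Rightarrow> 'a"
  assumes "positive_op A"
  shows "cinner (A x) y = cinner x (A y)"
proof -
  have A_add: "A (a + b) = A a + A b" and A_scaleC: "A (c *\<^sub>C a) = c *\<^sub>C A a" for a b c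
    using assms by (auto simp: positive_op_def bounded_op_def linear_simps)
  define p where "p a b = cinner a (A b)" for a b
  have p_real: "Im (p a a) = 0" for a using assms by (simp add: positive_op_def p_def)
  have p_add: "p (a + b) (a + b) = p a a + p a b + p b a + p b b" for a b
    by (simp add: p_def A_add cinner_add_left cinner_add_right)
  have "Im (p x y + p y x) = 0"
    using p_real[of "x + y"] p_real[of x] p_real[of y] p_add[of x y] by simp
  moreover have "Im (p x (\<i> *\<^sub>C y) + p (\<i> *\<^sub>C y) x) = 0"
    using p_real[of "x + \<i> *\<^sub>C y"] p_real[of x] p_real[of "\<i> *\<^sub>C y"] p_add[of x "\<i> *\<^sub>C y"]
    by simp
  then have "Re (p x y - p y x) = 0"
    by (simp add: p_def A_scaleC cinner_scaleC_left cinner_scaleC_right)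
  ultimately have "p x y = cnj (p y x)" by (simp add: complex_eq_iff)
  then show ?thesis by (simp add: p_def cinner_conj_sym[of "A x"])
qed

lemma adj_positive_op:
  fixes A :: "'a::chilbert_space \<Rightarrow> 'a"
  assumes "positive_op A"
  shows "adj A = A"
  using assms by (intro adj_eqI) (simp_all add: positive_op_def positive_op_cinner_sym)

lemma adj_right_inverse_positive_op:
  fixes A S :: "'a::chilbert_space \<Rightarrow> 'a"
  assumes "positive_op A" and "bounded_op S" and "A \<circ> S = id"
  shows "adj S = S"
proof (rule adj_eqI)
  have AS: "A (S x) = x" for x using fun_cong[OF assms(3)] by simp
  show "cinner (S x) y = cinner x (S y)" for x y
    using positive_op_cinner_sym[OF assms(1), of "S x" "S y"] by (simp add: AS)
qed fact

lemma comp_commute_inverse: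
  assumes "A \<circ> T = T \<circ> A" and "A \<circ> S = id" and "S \<circ> A = id"
  shows "S \<circ> T = T \<circ> S"
proof -
  have "S \<circ> T = S \<circ> T \<circ> (A \<circ> S)" by (simp add: assms(2))
  also have "\<dots> = (S \<circ> A) \<circ> T \<circ> S" by (simp add: assms(1) comp_assoc)
  finally show ?thesis by (simp add: assms(3))
qed

theorem proposition2p12:
  fixes A B X :: "'a::chilbert_space \<Rightarrow> 'a"
  assumes "bounded_op A" and "bounded_op B" and "bounded_op X"
    and "positive_op A" and "invertible_op A"
    and "A \<circ> B = adj X \<circ> X"
    and "A \<circ> X = X \<circ> A"
  shows "\<exists>W. bounded_op W \<and> X = A \<circ> W \<and> B = adj W \<circ> A \<circ> W"
proof -
  obtain S where "bounded_op S" and AS: "A \<circ> S = id" and SA: "S \<circ> A = id"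
    using assms(5) unfolding invertible_op_def by blast
  have adj_A: "adj A = A" and adj_S: "adj S = S"
    using adj_positive_op adj_right_inverse_positive_op assms(4) \<open>bounded_op S\<close> AS by blast+
  have "A \<circ> adj X = adj X \<circ> A"
    using adj_comp[OF assms(1,3)] adj_comp[OF assms(3,1)] assms(7) adj_A by simp
  then have S_adj_X: "S \<circ> adj X = adj X \<circ> S" using AS SA by (rule comp_commute_inverse)
  define W where "W = S \<circ> X"
  have "bounded_op W" unfolding W_def using \<open>bounded_op S\<close> assms(3) by (rule bounded_op_comp)
  moreover have "X = A \<circ> W" by (simp add: W_def AS flip: comp_assoc)
  moreover have "adj W \<circ> A \<circ> W = B"
  proof -
    have "adj W \<circ> A \<circ> W = adj X \<circ> S \<circ> (A \<circ> S) \<circ> X"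
      by (simp add: W_def adj_comp \<open>bounded_op S\<close> assms(3) adj_S comp_assoc)
    also have "\<dots> = S \<circ> (A \<circ> B)"
      by (simp add: AS assms(6) S_adj_X flip: comp_assoc)
    also have "\<dots> = B" by (simp add: SA flip: comp_assoc)
    finally show ?thesis .
  qed
  ultimately show ?thesis by metis
qed

end
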